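(* In the allocation problem and Synchronized Greedy (SG) mechanism described in the context, let $\ell\ge 1$ and suppose $\min_j q_j\ge \max_{S:|S|=\ell}\sum_{i\in S} r_i$. Then for every set $S$ of $\ell$ agents there is no bid profile $\sigma$ with $\sigma_i=\pi_i$ for all $i\notin S$ such that every $i\in S$ weakly prefers $a^\sigma_{i*}$ to $a^\pi_{i*}$ (i.e., $a^\sigma_{i*}=a^\pi_{i*}$ or $a^\sigma_{i*}>_i a^\pi_{i*}$) and at least one $i\in S$ has $a^\sigma_{i*}>_i a^\pi_{i*}$.
   Context: There are $m$ distinct divisible goods; good $j$ is available in amount $q_j>0$. There are $n$ agents; agent $i$ is to receive a total of $r_i>0$, with $\sum_j q_j=\sum_i r_i$. An allocation is a family $a_{ij}\ge 0$ with $\sum_j a_{ij}=r_i$ and $\sum_i a_{ij}=q_j$; $a_{i*}=(a_{i1},\ldots,a_{im})$ is agent $i$'s share. Each agent $i$ has a true preference list $\pi_i$, a permutation of the goods ($\pi_i(1)$ most preferred); $\pi=(\pi_1,\ldots,\pi_n)$. Agent $i$ prefers $a_{i*}$ to $b_{i*}$, written $a_{i*}>_i b_{i*}$, if the leftmost nonzero coordinate of $(a_{i\pi_i(k)}-b_{i\pi_i(k)})_{k=1}^m$ is positive. The SG mechanism: each agent $i$ bids a permutation $\sigma_i$ of the goods; over time $t\in[0,1]$ each agent $i$ receives, at rate $r_i$, the good highest in $\sigma_i$ among those not yet exhausted (a good is exhausted when the total amount handed out equals $q_j$; several agents may receive a good simultaneously; upon exhaustion, agents receiving it switch instantly to their next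 non-exhausted good). $a^\sigma_{ij}$ is the total amount of good $j$ agent $i$ receives under bid profile $\sigma$. *)

theory Defs
  imports Main "HOL.Real"
begin

text \<open>Conventions: agents are 0..<n, goods are 0..<m. A preference list / bid of agent i
  is a function p i :: nat => nat, a bijection of {..<m}, with p i k the (k+1)-st most
  preferred good. An allocation is a :: nat => nat => real, a i j = amount of good j to agent i.\<close>

definition strict_pref :: "nat \<Rightarrow> (nat \<Rightarrow> nat) \<Rightarrow> (nat \<Rightarrow> real) \<Rightarrow> (nat \<Rightarrow> real) \<Rightarrow> bool" where
  "strict_pref m p x y \<longleftrightarrow>
     (\<exists>k<m. (\<forall>k'<k. x (p k') = y (p k')) \<and> x (p k) > y (p k))"

definition weak_pref :: "nat \<Rightarrow> (nat \<Rightarrow> nat) \<Rightarrow> (nat \<Rightarrow> real) \<Rightarrow> (nat \<Rightarrow> real) \<Rightarrow> bool" where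
  "weak_pref m p x y \<longleftrightarrow> (\<forall>j<m. x j = y j) \<or> strict_pref m p x y"

text \<open>Synchronized Greedy, simulated phase by phase. State: (current time t,
  remaining amounts rem, amounts handed out so far). A good j is exhausted iff rem j \<le> 0.\<close>

definition eats :: "nat \<Rightarrow> (nat \<Rightarrow> nat \<Rightarrow> nat) \<Rightarrow> (nat \<Rightarrow> real) \<Rightarrow> nat \<Rightarrow> nat \<Rightarrow> bool" where
  "eats m \<sigma> rem i j \<longleftrightarrow>
     (\<exists>k<m. rem (\<sigma> i k) > 0) \<and> j = \<sigma> i (LEAST k. k < m \<and> rem (\<sigma> i k) > 0)"

definition eat_rate :: "nat \<Rightarrow> nat \<Rightarrow> (nat \<Rightarrow> real) \<Rightarrow> (nat \<Rightarrow> nat \<Rightarrow> nat) \<Rightarrow> (nat \<Rightarrow> real) \<Rightarrow> nat \<Rightarrow> real" where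
  "eat_rate n m r \<sigma> rem j = (\<Sum>i<n. if eats m \<sigma> rem i j then r i else 0)"

definition phase_len :: "nat \<Rightarrow> nat \<Rightarrow> (nat \<Rightarrow> real) \<Rightarrow> (nat \<Rightarrow> nat \<Rightarrow> nat) \<Rightarrow> real \<Rightarrow> (nat \<Rightarrow> real) \<Rightarrow> real" where
  "phase_len n m r \<sigma> t rem =
     Min (insert (1 - t) ((\<lambda>j. rem j / eat_rate n m r \<sigma> rem j) `
                          {j. j < m \<and> 0 < eat_rate n m r \<sigma> rem j}))"

definition sg_step :: "nat \<Rightarrow> nat \<Rightarrow> (nat \<Rightarrow> real) \<Rightarrow> (nat \<Rightarrow> nat \<Rightarrow> nat) \<Rightarrow>
     real \<times> (nat \<Rightarrow> real) \<times> (nat \<Rightarrow> nat \<Rightarrow> real) \<Rightarrow> real \<times> (nat \<Rightarrow> real) \<times> (nat \<Rightarrow> nat \<Rightarrow> real)" where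
  "sg_step n m r \<sigma> st =
     (case st of (t, rem, a) \<Rightarrow>
       let d = phase_len n m r \<sigma> t rem in
       (t + d,
        \<lambda>j. rem j - eat_rate n m r \<sigma> rem j * d,
        \<lambda>i j. a i j + (if i < n \<and> eats m \<sigma> rem i j then r i * d else 0)))"

text \<open>Each phase either ends at time 1 or exhausts a good, so m phases suffice.\<close>
definition SG :: "nat \<Rightarrow> nat \<Rightarrow> (nat \<Rightarrow> real) \<Rightarrow> (nat \<Rightarrow> real) \<Rightarrow> (nat \<Rightarrow> nat \<Rightarrow> nat) \<Rightarrow> nat \<Rightarrow> nat \<Rightarrow> real" where
  "SG n m q r \<sigma> = snd (snd ((sg_step n m r \<sigma> ^^ m) (0, q, \<lambda>i j. 0)))"

end

theory Submission
  imports Defs "HOL-Analysis.Analysis"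
begin

text \<open>SG is analysed as a continuous-time process: c i j t is the amount of good j that agent i
  has eaten by time t. Compare the truthful run with the run after a deviation of the coalition S.
  The key claim is that every good exhausted by time t in the truthful run is exhausted by time t
  after the deviation as well. Granting it, a member of S only ever eats goods that are still
  available in the truthful run, where it always eats its best available good; so its share
  cannot become lexicographically better. For the claim, take the first time \<tau> at which some good
  g is exhausted truthfully but not after the deviation. Outsiders, whose better goods are
  exhausted in both runs, keep eating g at least as long as truthfully, and members that are not
  worse off end up with at least their truthful amount of g. Since the truthful run has handed out
  all of g by \<tau>, these inequalities are equalities, which forces that the outsiders ate none of g
  before \<tau>. So the members alone ate q g in time \<tau> < 1, i.e. q g < (\<Sum>i\<in>S. r i), contradicting
  the capacity assumption.\<close>

section \<open>Right-local monotonicity on the reals\<close>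

lemma right_local_mono_imp_le:
  fixes h :: "real \<Rightarrow> real"
  assumes ab: "a \<le> b" and cont: "continuous_on {a..b} h"
    and loc: "\<And>t. a \<le> t \<Longrightarrow> t < b \<Longrightarrow> \<exists>\<epsilon>>0. \<forall>s. t \<le> s \<and> s \<le> t + \<epsilon> \<and> s \<le> b \<longrightarrow> h t \<le> h s"
  shows "h a \<le> h b"
proof -
  define A where "A = {x\<in>{a..b}. \<forall>y\<in>{a..x}. h a \<le> h y}"
  have aA: "a \<in> A" using ab by (auto simp: A_def)
  have bdd: "bdd_above A" unfolding A_def by (rule bdd_aboveI[of _ b]) auto
  define s where "s = Sup A"
  have as: "a \<le> s" unfolding s_def using aA bdd by (meson cSup_upper)
  have sb: "s \<le> b" unfolding s_def using aA by (intro cSup_least) (auto simp: A_def)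
  have below: "h a \<le> h y" if "a \<le> y" "y < s" for y
  proof -
    obtain x where "x \<in> A" "y < x" using \<open>y < s\<close> aA unfolding s_def
      by (metis empty_iff less_cSup_iff bdd)
    thus ?thesis using that by (auto simp: A_def)
  qed
  have sA: "\<forall>y\<in>{a..s}. h a \<le> h y"
  proof (cases "a < s")
    case True
    have "closure {a..<s} \<subseteq> {a..b} \<inter> h -` {h a..}"
      using below sb by (intro closure_minimal continuous_closed_preimage[OF cont]) auto
    thus ?thesis using True by auto
  next
    case False thus ?thesis using as by auto
  qed
  have "s = b"
  proof (rule ccontr)
    assume "s \<noteq> b"
    hence "s < b" using sb by auto
    obtain e where e: "e > 0" "\<forall>u. s \<le> u \<and> u \<le> s + e \<and> u \<le> b \<longrightarrow> h s \<le> h u"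
      using loc[OF as \<open>s < b\<close>] by blast
    have "h a \<le> h y" if "a \<le> y" "y \<le> min (s + e) b" for y
    proof (cases "y \<le> s")
      case True thus ?thesis using sA that by auto
    next
      case False
      hence "h s \<le> h y" using e that by auto
      moreover have "h a \<le> h s" using sA as by auto
      ultimately show ?thesis by linarith
    qed
    hence "min (s + e) b \<in> A" using as \<open>s < b\<close> e by (auto simp: A_def)
    hence "min (s + e) b \<le> s" unfolding s_def using bdd by (rule cSup_upper)
    thus False using e \<open>s < b\<close> by simp
  qed
  thus ?thesis using sA ab by auto
qed

lemma right_linear_increase_le:
  fixes f :: "real \<Rightarrow> real"
  assumes "x \<le> y" and cont: "continuous_on {x..y} f"
    and loc: "\<And>t. x \<le> t \<Longrightarrow> t < y \<Longrightarrow>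
      \<exists>\<rho>\<le>\<beta>. \<exists>\<epsilon>>0. \<forall>s. t \<le> s \<longrightarrow> s \<le> t + \<epsilon> \<longrightarrow> f s = f t + \<rho> * (s - t)"
  shows "f y - f x \<le> \<beta> * (y - x)"
proof -
  have "(\<lambda>s. \<beta> * s - f s) x \<le> (\<lambda>s. \<beta> * s - f s) y"
  proof (rule right_local_mono_imp_le[OF \<open>x \<le> y\<close>])
    show "continuous_on {x..y} (\<lambda>s. \<beta> * s - f s)"
      by (intro continuous_intros cont)
    fix t assume "x \<le> t" "t < y"
    then obtain \<rho> \<epsilon> where "\<rho> \<le> \<beta>" "0 < \<epsilon>" and f: "\<forall>s. t \<le> s \<longrightarrow> s \<le> t + \<epsilon> \<longrightarrow> f s = f t + \<rho> * (s - t)"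
      using loc by blast
    have "\<beta> * t - f t \<le> \<beta> * s - f s" if "t \<le> s" "s \<le> t + \<epsilon>" for s
    proof -
      have "f s = f t + \<rho> * (s - t)" using f that by blast
      hence "(\<beta> * s - f s) - (\<beta> * t - f t) = (\<beta> - \<rho>) * (s - t)"
        by (simp add: algebra_simps)
      moreover have "0 \<le> (\<beta> - \<rho>) * (s - t)" using \<open>\<rho> \<le> \<beta>\<close> that by simp
      ultimately show ?thesis by linarith
    qed
    thus "\<exists>\<epsilon>>0. \<forall>s. t \<le> s \<and> s \<le> t + \<epsilon> \<and> s \<le> y \<longrightarrow> \<beta> * t - f t \<le> \<beta> * s - f s"
      using \<open>0 < \<epsilon>\<close> by blast
  qed
  thus ?thesis by (simp add: algebra_simps)
qed

lemma right_linear_mono: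
  fixes f :: "real \<Rightarrow> real"
  assumes "x \<le> y" and "continuous_on {x..y} f"
    and loc: "\<And>t. x \<le> t \<Longrightarrow> t < y \<Longrightarrow>
      \<exists>\<rho>\<ge>0. \<exists>\<epsilon>>0. \<forall>s. t \<le> s \<longrightarrow> s \<le> t + \<epsilon> \<longrightarrow> f s = f t + \<rho> * (s - t)"
  shows "f x \<le> f y"
proof -
  have "(\<lambda>s. - f s) y - (\<lambda>s. - f s) x \<le> 0 * (y - x)"
  proof (rule right_linear_increase_le[OF \<open>x \<le> y\<close>])
    show "continuous_on {x..y} (\<lambda>s. - f s)" by (intro continuous_intros) fact
    fix t assume "x \<le> t" "t < y"
    then obtain \<rho> \<epsilon> where "0 \<le> \<rho>" "0 < \<epsilon>" and f: "\<forall>s. t \<le> s \<longrightarrow> s \<le> t + \<epsilon> \<longrightarrow> f s = f t + \<rho> * (s - t)"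
      using loc by blast
    have "- f s = - f t + (- \<rho>) * (s - t)" if "t \<le> s" "s \<le> t + \<epsilon>" for s
      using f that by (metis minus_add_distrib mult_minus_left)
    thus "\<exists>\<rho>\<le>0. \<exists>\<epsilon>>0. \<forall>s. t \<le> s \<longrightarrow> s \<le> t + \<epsilon> \<longrightarrow> - f s = - f t + \<rho> * (s - t)"
      using \<open>0 \<le> \<rho>\<close> \<open>0 < \<epsilon>\<close> by (meson neg_le_0_iff_le)
  qed
  thus ?thesis by simp
qed

section \<open>The greedy choice of an agent\<close>

lemma eats_iff:
  "eats m b rem i j \<longleftrightarrow> (\<exists>k<m. j = b i k \<and> 0 < rem j \<and> (\<forall>k'<k. \<not> 0 < rem (b i k')))"
proof
  assume "eats m b rem i j"
  then obtain k0 where k0: "k0 < m" "0 < rem (b i k0)" and j: "j = b i (LEAST k. k < m \<and> 0 < rem (b i k))"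
    unfolding eats_def by blast
  define k where "k = (LEAST k. k < m \<and> 0 < rem (b i k))"
  have "k < m \<and> 0 < rem (b i k)" unfolding k_def by (rule LeastI[of _ k0]) (use k0 in auto)
  moreover have "\<not> 0 < rem (b i k')" if "k' < k" for k'
    using not_less_Least[of k' "\<lambda>k. k < m \<and> 0 < rem (b i k)"] that \<open>k < m \<and> _\<close>
    unfolding k_def by auto
  ultimately show "\<exists>k<m. j = b i k \<and> 0 < rem j \<and> (\<forall>k'<k. \<not> 0 < rem (b i k'))"
    using j unfolding k_def by blast
next
  assume "\<exists>k<m. j = b i k \<and> 0 < rem j \<and> (\<forall>k'<k. \<not> 0 < rem (b i k'))"
  then obtain k where k: "k < m" "j = b i k" "0 < rem j" "\<forall>k'<k. \<not> 0 < rem (b i k')" by blast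
  have "(LEAST k. k < m \<and> 0 < rem (b i k)) = k"
    by (rule Least_equality) (use k in \<open>auto simp: not_less[symmetric]\<close>)
  thus "eats m b rem i j" unfolding eats_def using k by auto
qed

lemma eats_remaining_pos: "eats m b rem i j \<Longrightarrow> 0 < rem j"
  by (auto simp: eats_iff)

lemma eats_unique: "eats m b rem i j \<Longrightarrow> eats m b rem i j' \<Longrightarrow> j = j'"
  by (auto simp: eats_def)

lemma eats_lt:
  "bij_betw (b i) {..<m} {..<m} \<Longrightarrow> eats m b rem i j \<Longrightarrow> j < m"
  unfolding eats_iff using bij_betwE by blast

lemma eats_ranked_before:
  assumes "k < m" "0 < rem (b i k)"
  obtains k' where "k' \<le> k" "eats m b rem i (b i k')"
proof
  let ?k = "LEAST k. k < m \<and> 0 < rem (b i k)"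
  show "?k \<le> k" by (rule Least_le) (use assms in auto)
  show "eats m b rem i (b i ?k)" unfolding eats_def using assms by auto
qed

lemma eats_cong:
  assumes "\<And>k. k < m \<Longrightarrow> b' i k = b i k"
    and "\<And>k. k < m \<Longrightarrow> 0 < rem' (b i k) \<longleftrightarrow> 0 < rem (b i k)"
  shows "eats m b' rem' i j \<longleftrightarrow> eats m b rem i j"
proof -
  have "(j = b' i k \<and> 0 < rem' j \<and> (\<forall>k'<k. \<not> 0 < rem' (b' i k'))) \<longleftrightarrow>
        (j = b i k \<and> 0 < rem j \<and> (\<forall>k'<k. \<not> 0 < rem (b i k')))" if "k < m" for k
  proof -
    have "\<forall>k'<k. b' i k' = b i k' \<and> (0 < rem' (b i k') \<longleftrightarrow> 0 < rem (b i k'))"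
      using assms that by simp
    thus ?thesis using assms that by auto
  qed
  thus ?thesis unfolding eats_iff by blast
qed

lemma sum_if_eats:
  fixes x :: real
  assumes "inj_on p K" "finite K"
  shows "(\<Sum>k\<in>K. if eats m b rem i (p k) then x else 0) = (if \<exists>k\<in>K. eats m b rem i (p k) then x else 0)"
proof (cases "\<exists>k\<in>K. eats m b rem i (p k)")
  case True
  then obtain k0 where k0: "k0 \<in> K" "eats m b rem i (p k0)" by blast
  have "eats m b rem i (p k) \<longleftrightarrow> k = k0" if "k \<in> K" for k
  proof
    assume "eats m b rem i (p k)"
    hence "p k = p k0" using eats_unique[OF k0(2)] by metis
    thus "k = k0" by (rule inj_onD[OF assms(1) _ that k0(1)])
  qed (use k0 in simp)
  hence "(\<Sum>k\<in>K. if eats m b rem i (p k) then x else 0) = (\<Sum>k\<in>K. if k = k0 then x else 0)"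
    by (intro sum.cong) auto
  thus ?thesis using True k0 assms(2) by simp
qed simp

section \<open>Continuous-time runs\<close>

definition remaining :: "nat \<Rightarrow> (nat \<Rightarrow> real) \<Rightarrow> (nat \<Rightarrow> nat \<Rightarrow> real \<Rightarrow> real) \<Rightarrow> real \<Rightarrow> nat \<Rightarrow> real" where
  "remaining n q c t j = q j - (\<Sum>i<n. c i j t)"

locale greedy_run =
  fixes n m :: nat and q r :: "nat \<Rightarrow> real" and b :: "nat \<Rightarrow> nat \<Rightarrow> nat"
    and c :: "nat \<Rightarrow> nat \<Rightarrow> real \<Rightarrow> real"
  assumes rate_pos: "\<And>i. i < n \<Longrightarrow> 0 < r i"
    and continuous: "\<And>i j. continuous_on {0..1} (c i j)"
    and start: "\<And>i j. c i j 0 = 0"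
    and right_linear: "\<And>t. 0 \<le> t \<Longrightarrow> t < 1 \<Longrightarrow> \<exists>\<epsilon>>0. t + \<epsilon> \<le> 1 \<and>
      (\<forall>s i j. t \<le> s \<longrightarrow> s \<le> t + \<epsilon> \<longrightarrow> i < n \<longrightarrow> j < m \<longrightarrow>
        c i j s = c i j t + (if eats m b (remaining n q c t) i j then r i else 0) * (s - t))"
    and remaining_nonneg: "\<And>t j. 0 \<le> t \<Longrightarrow> t \<le> 1 \<Longrightarrow> j < m \<Longrightarrow> 0 \<le> remaining n q c t j"
begin

lemma right_linearE:
  assumes "0 \<le> t" "t < 1"
  obtains \<epsilon> where "0 < \<epsilon>" "t + \<epsilon> \<le> 1"
    "\<And>s i j. t \<le> s \<Longrightarrow> s \<le> t + \<epsilon> \<Longrightarrow> i < n \<Longrightarrow> j < m \<Longrightarrow>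
       c i j s = c i j t + (if eats m b (remaining n q c t) i j then r i else 0) * (s - t)"
  using right_linear[OF assms] by blast

lemma continuous_on_subinterval: "0 \<le> x \<Longrightarrow> y \<le> 1 \<Longrightarrow> continuous_on {x..y} (c i j)"
  by (rule continuous_on_subset[OF continuous]) auto

lemma remaining_continuous: "continuous_on {0..1} (\<lambda>t. remaining n q c t j)"
  unfolding remaining_def by (intro continuous_intros continuous)

lemma consumption_right_linear:
  assumes "0 \<le> t" "t < 1" "i < n" "j < m"
  shows "\<exists>\<epsilon>>0. \<forall>s. t \<le> s \<longrightarrow> s \<le> t + \<epsilon> \<longrightarrow>
    c i j s = c i j t + (if eats m b (remaining n q c t) i j then r i else 0) * (s - t)"
  using right_linearE[OF assms(1,2)] assms(3,4) by metis

lemma consumption_mono: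
  assumes "0 \<le> x" "x \<le> y" "y \<le> 1" "i < n" "j < m"
  shows "c i j x \<le> c i j y"
proof (rule right_linear_mono[OF \<open>x \<le> y\<close> continuous_on_subinterval[OF assms(1,3)]])
  fix t assume "x \<le> t" "t < y"
  moreover have "0 \<le> (if eats m b (remaining n q c t) i j then r i else 0)"
    using rate_pos[OF \<open>i < n\<close>] by simp
  ultimately show "\<exists>\<rho>\<ge>0. \<exists>\<epsilon>>0. \<forall>s. t \<le> s \<longrightarrow> s \<le> t + \<epsilon> \<longrightarrow> c i j s = c i j t + \<rho> * (s - t)"
    using consumption_right_linear[of t i j] assms by (meson le_less_trans order.strict_trans2 order_trans)
qed

lemma consumption_nonneg: "0 \<le> t \<Longrightarrow> t \<le> 1 \<Longrightarrow> i < n \<Longrightarrow> j < m \<Longrightarrow> 0 \<le> c i j t"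
  using consumption_mono[of 0 t] start by auto

lemma consumption_increase_le:
  assumes "0 \<le> x" "x \<le> y" "y \<le> 1" "i < n" "j < m" "0 \<le> \<beta>"
    and eating: "\<And>t. x \<le> t \<Longrightarrow> t < y \<Longrightarrow> eats m b (remaining n q c t) i j \<Longrightarrow> r i \<le> \<beta>"
  shows "c i j y - c i j x \<le> \<beta> * (y - x)"
proof (rule right_linear_increase_le[OF \<open>x \<le> y\<close> continuous_on_subinterval[OF assms(1,3)]])
  fix t assume t: "x \<le> t" "t < y"
  moreover have "(if eats m b (remaining n q c t) i j then r i else 0) \<le> \<beta>"
    using eating[OF t] \<open>0 \<le> \<beta>\<close> by simp
  ultimately show "\<exists>\<rho>\<le>\<beta>. \<exists>\<epsilon>>0. \<forall>s. t \<le> s \<longrightarrow> s \<le> t + \<epsilon> \<longrightarrow> c i j s = c i j t + \<rho> * (s - t)"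
    using consumption_right_linear[of t i j] assms by (meson le_less_trans order.strict_trans2 order_trans)
qed

lemma consumption_const_if_not_eating:
  assumes "0 \<le> x" "x \<le> y" "y \<le> 1" "i < n" "j < m"
    and "\<And>t. x \<le> t \<Longrightarrow> t < y \<Longrightarrow> \<not> eats m b (remaining n q c t) i j"
  shows "c i j y = c i j x"
proof -
  have "c i j y - c i j x \<le> 0 * (y - x)"
    by (rule consumption_increase_le[OF assms(1-5) order.refl]) (use assms(6) in blast)
  thus ?thesis using consumption_mono[OF assms(1-5)] by simp
qed

lemma eats_before_consumption_increase:
  assumes "0 \<le> x" "x \<le> y" "y \<le> 1" "i < n" "j < m" "c i j x < c i j y"
  obtains t where "x \<le> t" "t < y" "eats m b (remaining n q c t) i j"
proof -
  have "\<not> (\<forall>t. x \<le> t \<longrightarrow> t < y \<longrightarrow> \<not> eats m b (remaining n q c t) i j)"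
  proof
    assume "\<forall>t. x \<le> t \<longrightarrow> t < y \<longrightarrow> \<not> eats m b (remaining n q c t) i j"
    hence "c i j y = c i j x" by (intro consumption_const_if_not_eating[OF assms(1-5)]) blast
    thus False using assms(6) by simp
  qed
  thus thesis using that by blast
qed

lemma remaining_antimono:
  "0 \<le> x \<Longrightarrow> x \<le> y \<Longrightarrow> y \<le> 1 \<Longrightarrow> j < m \<Longrightarrow> remaining n q c y j \<le> remaining n q c x j"
  unfolding remaining_def by (auto intro: sum_mono consumption_mono)

lemma consumption_const_after_exhausted:
  assumes "0 \<le> x" "x \<le> y" "y \<le> 1" "i < n" "j < m" "remaining n q c x j \<le> 0"
  shows "c i j y = c i j x"
proof (rule consumption_const_if_not_eating[OF assms(1-5)])
  fix t assume "x \<le> t" "t < y"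
  hence "remaining n q c t j \<le> 0" using remaining_antimono[of x t j] assms by auto
  thus "\<not> eats m b (remaining n q c t) i j" using eats_remaining_pos by fastforce
qed

lemma prefix_consumption_right_linear:
  fixes p :: "nat \<Rightarrow> nat"
  assumes "0 \<le> t" "t < 1" "i < n" "inj_on p {..k}" "\<And>k'. k' \<le> k \<Longrightarrow> p k' < m"
  shows "\<exists>\<epsilon>>0. \<forall>s. t \<le> s \<longrightarrow> s \<le> t + \<epsilon> \<longrightarrow> (\<Sum>k'\<le>k. c i (p k') s) = (\<Sum>k'\<le>k. c i (p k') t) +
    (if \<exists>k'\<in>{..k}. eats m b (remaining n q c t) i (p k') then r i else 0) * (s - t)"
proof -
  obtain \<epsilon> where "0 < \<epsilon>" and eq: "\<forall>s i j. t \<le> s \<longrightarrow> s \<le> t + \<epsilon> \<longrightarrow> i < n \<longrightarrow> j < m \<longrightarrow>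
      c i j s = c i j t + (if eats m b (remaining n q c t) i j then r i else 0) * (s - t)"
    using right_linear[OF assms(1,2)] by blast
  have "(\<Sum>k'\<le>k. c i (p k') s) = (\<Sum>k'\<le>k. c i (p k') t) +
      (if \<exists>k'\<in>{..k}. eats m b (remaining n q c t) i (p k') then r i else 0) * (s - t)"
    if "t \<le> s" "s \<le> t + \<epsilon>" for s
  proof -
    have "(\<Sum>k'\<le>k. c i (p k') s) =
        (\<Sum>k'\<le>k. c i (p k') t + (if eats m b (remaining n q c t) i (p k') then r i else 0) * (s - t))"
      by (rule sum.cong[OF refl]) (simp add: eq[rule_format, OF that assms(3)] assms(5))
    also have "\<dots> = (\<Sum>k'\<le>k. c i (p k') t) +
        (\<Sum>k'\<le>k. if eats m b (remaining n q c t) i (p k') then r i else 0) * (s - t)"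
      by (simp add: sum.distrib sum_distrib_right)
    finally show ?thesis by (simp only: sum_if_eats[OF assms(4) finite_atMost])
  qed
  thus ?thesis using \<open>0 < \<epsilon>\<close> by blast
qed

end

section \<open>The phases of SG form a run\<close>

lemma interval_index:
  fixes f :: "nat \<Rightarrow> real"
  assumes "f 0 \<le> t" "t < f N"
  shows "\<exists>k<N. f k \<le> t \<and> t < f (Suc k)"
  using assms(2)
proof (induction N)
  case 0 thus ?case using assms(1) by simp
next
  case (Suc N)
  show ?case
  proof (cases "f N \<le> t")
    case True thus ?thesis using Suc.prems by auto
  next
    case False
    then obtain k where "k < N" "f k \<le> t" "t < f (Suc k)" using Suc.IH by (auto simp: not_le)
    thus ?thesis by (intro exI[of _ k]) simp
  qed
qed

lemma mono_interval_index_le: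
  fixes f :: "nat \<Rightarrow> real"
  assumes "mono f" "f 0 \<le> t" "t \<le> f N" "0 < N"
  shows "\<exists>k<N. f k \<le> t \<and> t \<le> f (Suc k)"
proof (cases "t < f N")
  case True thus ?thesis using interval_index[OF assms(2) True] by force
next
  case False
  then obtain N' where "N = Suc N'" "t = f N" using assms(3,4) by (cases N) auto
  thus ?thesis using monoD[OF assms(1), of N' N] by force
qed

lemma eat_rate_nonneg: "(\<And>i. i < n \<Longrightarrow> 0 < r i) \<Longrightarrow> 0 \<le> eat_rate n m r b rem j"
  unfolding eat_rate_def by (intro sum_nonneg) (auto intro: less_imp_le)

lemma eat_rate_pos_imp_remaining_pos:
  assumes "0 < eat_rate n m r b rem j" shows "0 < rem j"
proof -
  have "\<not> (\<forall>i\<in>{..<n}. (if eats m b rem i j then r i else 0) = 0)"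
    using assms sum.neutral[of "{..<n}" "\<lambda>i. if eats m b rem i j then r i else 0"]
    unfolding eat_rate_def by force
  then obtain i where "eats m b rem i j" by (metis (full_types))
  thus ?thesis by (rule eats_remaining_pos)
qed

lemma eat_rate_total:
  assumes bids: "\<And>i. i < n \<Longrightarrow> bij_betw (b i) {..<m} {..<m}" and "\<exists>j<m. 0 < rem j"
  shows "(\<Sum>j<m. eat_rate n m r b rem j) = (\<Sum>i<n. r i)"
proof -
  have "(\<Sum>j<m. if eats m b rem i j then r i else 0) = r i" if i: "i < n" for i
  proof -
    obtain j0 where j0: "j0 < m" "0 < rem j0" using assms(2) by blast
    have "j0 \<in> b i ` {..<m}" using bids[OF i] j0(1) by (simp add: bij_betw_def)
    then obtain k0 where "k0 < m" "b i k0 = j0" by auto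
    then obtain e where e: "eats m b rem i e"
      using eats_ranked_before[of k0 m rem b i] j0(2) by blast
    have "(\<Sum>j<m. if eats m b rem i j then r i else 0) = (\<Sum>j<m. if j = e then r i else 0)"
      by (intro sum.cong refl) (metis e eats_unique)
    thus ?thesis using eats_lt[OF bids[OF i] e] by simp
  qed
  thus ?thesis unfolding eat_rate_def by (subst sum.swap) simp
qed

locale sg_setting =
  fixes n m :: nat and q r :: "nat \<Rightarrow> real" and b :: "nat \<Rightarrow> nat \<Rightarrow> nat"
  assumes q_pos: "\<And>j. j < m \<Longrightarrow> 0 < q j" and r_pos: "\<And>i. i < n \<Longrightarrow> 0 < r i"
    and total: "(\<Sum>j<m. q j) = (\<Sum>i<n. r i)"
    and bids: "\<And>i. i < n \<Longrightarrow> bij_betw (b i) {..<m} {..<m}" and agents: "0 < n"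
begin

definition phase_state :: "nat \<Rightarrow> real \<times> (nat \<Rightarrow> real) \<times> (nat \<Rightarrow> nat \<Rightarrow> real)" where
  "phase_state k = (sg_step n m r b ^^ k) (0, q, \<lambda>i j. 0)"

definition "phase_time k = fst (phase_state k)"
definition "phase_left k = fst (snd (phase_state k))"
definition "phase_alloc k = snd (snd (phase_state k))"
definition "phase_dur k = phase_len n m r b (phase_time k) (phase_left k)"

definition agent_rate :: "nat \<Rightarrow> nat \<Rightarrow> nat \<Rightarrow> real" where
  "agent_rate k i j = (if i < n \<and> eats m b (phase_left k) i j then r i else 0)"

abbreviation "rate k j \<equiv> eat_rate n m r b (phase_left k) j"

lemma rate_eq_sum: "rate k j = (\<Sum>i<n. agent_rate k i j)"
  unfolding eat_rate_def agent_rate_def by (intro sum.cong) auto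

lemma phase_0: "phase_time 0 = 0" "phase_left 0 = q" "phase_alloc 0 = (\<lambda>i j. 0)"
  unfolding phase_time_def phase_left_def phase_alloc_def phase_state_def by simp_all

lemma phase_Suc:
  "phase_time (Suc k) = phase_time k + phase_dur k"
  "phase_left (Suc k) j = phase_left k j - rate k j * phase_dur k"
  "phase_alloc (Suc k) i j = phase_alloc k i j + agent_rate k i j * phase_dur k"
proof -
  obtain t rm a where e: "phase_state k = (t, rm, a)" by (cases "phase_state k") auto
  have "phase_state (Suc k) = sg_step n m r b (phase_state k)" unfolding phase_state_def by simp
  thus "phase_time (Suc k) = phase_time k + phase_dur k"
    "phase_left (Suc k) j = phase_left k j - rate k j * phase_dur k"
    "phase_alloc (Suc k) i j = phase_alloc k i j + agent_rate k i j * phase_dur k"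
    unfolding phase_time_def phase_dur_def phase_left_def phase_alloc_def agent_rate_def sg_step_def e
    by (simp_all add: Let_def)
qed

lemma SG_eq_phase_alloc: "SG n m q r b = phase_alloc m"
  unfolding SG_def phase_alloc_def phase_state_def by simp

lemma rate_nonneg: "0 \<le> rate k j"
  using eat_rate_nonneg r_pos by blast

lemma phase_dur_props:
  assumes "0 \<le> phase_time k" "phase_time k \<le> 1" "\<forall>j<m. 0 \<le> phase_left k j"
  shows "0 \<le> phase_dur k" "phase_dur k \<le> 1 - phase_time k"
    "\<And>j. j < m \<Longrightarrow> rate k j * phase_dur k \<le> phase_left k j"
    "phase_dur k = 1 - phase_time k \<or> (\<exists>j<m. 0 < rate k j \<and> rate k j * phase_dur k = phase_left k j)"
proof -
  define M where "M = insert (1 - phase_time k)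
    ((\<lambda>j. phase_left k j / rate k j) ` {j. j < m \<and> 0 < rate k j})"
  have d: "phase_dur k = Min M" unfolding phase_dur_def phase_len_def M_def by simp
  have fin: "finite M" and ne: "M \<noteq> {}" unfolding M_def by auto
  show "0 \<le> phase_dur k" unfolding d using fin ne assms rate_nonneg by (auto simp: M_def)
  show "phase_dur k \<le> 1 - phase_time k" unfolding d using fin by (simp add: M_def)
  show "rate k j * phase_dur k \<le> phase_left k j" if "j < m" for j
  proof (cases "0 < rate k j")
    case True
    hence "phase_dur k \<le> phase_left k j / rate k j" unfolding d using fin that by (simp add: M_def)
    thus ?thesis using True by (simp add: pos_le_divide_eq mult.commute)
  next
    case False thus ?thesis using rate_nonneg[of k j] assms that by simp
  qed
  have "Min M \<in> M" using fin ne by (rule Min_in)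
  thus "phase_dur k = 1 - phase_time k \<or> (\<exists>j<m. 0 < rate k j \<and> rate k j * phase_dur k = phase_left k j)"
    unfolding d M_def by auto
qed

lemma phase_bounds: "0 \<le> phase_time k \<and> phase_time k \<le> 1 \<and> (\<forall>j<m. 0 \<le> phase_left k j)"
proof (induction k)
  case 0 show ?case using q_pos by (simp add: phase_0 less_imp_le)
next
  case (Suc k)
  thus ?case using phase_dur_props[of k] by (simp add: phase_Suc)
qed

lemma phase_time_nonneg: "0 \<le> phase_time k"
  and phase_time_le_1: "phase_time k \<le> 1"
  and phase_left_nonneg: "j < m \<Longrightarrow> 0 \<le> phase_left k j"
  using phase_bounds by blast+

lemma phase_dur_nonneg: "0 \<le> phase_dur k"
  and phase_dur_le: "phase_dur k \<le> 1 - phase_time k"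
  and phase_consumed_le: "j < m \<Longrightarrow> rate k j * phase_dur k \<le> phase_left k j"
  and phase_end_cases:
    "phase_dur k = 1 - phase_time k \<or> (\<exists>j<m. 0 < rate k j \<and> rate k j * phase_dur k = phase_left k j)"
  using phase_dur_props[OF phase_time_nonneg phase_time_le_1] phase_left_nonneg by blast+

lemma phase_time_mono: "mono phase_time"
  by (rule incseq_SucI) (simp add: phase_Suc phase_dur_nonneg)

lemma phase_left_eq: "phase_left k j = q j - (\<Sum>i<n. phase_alloc k i j)"
proof (induction k)
  case 0 show ?case by (simp add: phase_0)
next
  case (Suc k)
  thus ?case by (simp add: phase_Suc rate_eq_sum sum.distrib sum_distrib_right)
qed

lemma total_rate_pos: "0 < (\<Sum>i<n. r i)"
  using agents r_pos by (intro sum_pos) auto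

lemma phase_left_total: "(\<Sum>j<m. phase_left k j) = (\<Sum>j<m. q j) - phase_time k * (\<Sum>i<n. r i)"
proof (induction k)
  case 0 show ?case by (simp add: phase_0)
next
  case (Suc k)
  have step: "(\<Sum>j<m. phase_left (Suc k) j) = (\<Sum>j<m. phase_left k j) - (\<Sum>j<m. rate k j) * phase_dur k"
    by (simp add: phase_Suc sum_subtractf sum_distrib_right)
  show ?case
  proof (cases "\<exists>j<m. 0 < phase_left k j")
    case True
    thus ?thesis using step Suc eat_rate_total[OF bids True] by (simp add: phase_Suc algebra_simps)
  next
    case False
    hence "\<forall>j<m. phase_left k j = 0" using phase_left_nonneg by (meson linorder_not_less order_antisym)
    hence "phase_time k = 1" using Suc total total_rate_pos by simp
    hence "phase_dur k = 0" using phase_dur_nonneg[of k] phase_dur_le[of k] by simp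
    thus ?thesis using Suc by (simp add: phase_Suc)
  qed
qed

text \<open>A phase ending before time 1 exhausts a further good, so m phases reach time 1.\<close>

lemma phase_exhausted_count: "phase_time k = 1 \<or> k \<le> card {j. j < m \<and> phase_left k j \<le> 0}"
proof (induction k)
  case (Suc k)
  show ?case
  proof (cases "phase_time (Suc k) = 1")
    case False
    hence "phase_time k \<noteq> 1" and "phase_dur k \<noteq> 1 - phase_time k"
      using phase_dur_nonneg[of k] phase_dur_le[of k] by (auto simp: phase_Suc)
    then obtain j0 where j0: "j0 < m" "0 < rate k j0" "rate k j0 * phase_dur k = phase_left k j0"
      and IH: "k \<le> card {j. j < m \<and> phase_left k j \<le> 0}"
      using phase_end_cases[of k] Suc.IH by blast
    define X where "X = {j. j < m \<and> phase_left k j \<le> 0}"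
    define X' where "X' = {j. j < m \<and> phase_left (Suc k) j \<le> 0}"
    have "X \<subseteq> X'"
    proof
      fix j assume "j \<in> X"
      moreover have "0 \<le> rate k j * phase_dur k" using rate_nonneg phase_dur_nonneg by simp
      ultimately show "j \<in> X'" unfolding X_def X'_def phase_Suc by simp
    qed
    moreover have "j0 \<in> X'" "j0 \<notin> X"
      using j0 eat_rate_pos_imp_remaining_pos[OF j0(2)] by (simp_all add: X_def X'_def phase_Suc)
    moreover have "finite X'" by (simp add: X'_def)
    ultimately have "Suc (card X) \<le> card X'"
      by (metis card_insert_disjoint card_mono finite_subset insert_subsetI)
    thus ?thesis using IH by (simp add: X_def X'_def)
  qed simp
qed simp

lemma phase_time_final: "phase_time m = 1"
proof (rule ccontr)
  define X where "X = {j. j < m \<and> phase_left m j \<le> 0}"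
  assume "phase_time m \<noteq> 1"
  hence "m \<le> card X" using phase_exhausted_count unfolding X_def by blast
  moreover have "X \<subseteq> {..<m}" by (auto simp: X_def)
  ultimately have "X = {..<m}" by (metis card_lessThan card_seteq finite_lessThan)
  hence "phase_left m j \<le> 0" if "j < m" for j using that unfolding X_def by blast
  hence "\<forall>j<m. phase_left m j = 0" using phase_left_nonneg by (meson order_antisym)
  hence "phase_time m * (\<Sum>i<n. r i) = (\<Sum>i<n. r i)" using phase_left_total[of m] total by simp
  thus False using total_rate_pos \<open>phase_time m \<noteq> 1\<close> by simp
qed

lemma phase_alloc_sum: "phase_alloc k i j = (\<Sum>k'<k. agent_rate k' i j * phase_dur k')"
  by (induction k) (simp_all add: phase_0 phase_Suc)

text \<open>Each phase contributes its rate times the length of its intersection with [0, t].\<close>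

definition consumption :: "nat \<Rightarrow> nat \<Rightarrow> real \<Rightarrow> real" where
  "consumption i j t =
    (\<Sum>k<m. agent_rate k i j * (min (max t (phase_time k)) (phase_time (Suc k)) - phase_time k))"

lemma consumption_in_phase:
  assumes k: "k < m" and s: "phase_time k \<le> s" "s \<le> phase_time (Suc k)"
  shows "consumption i j s = phase_alloc k i j + agent_rate k i j * (s - phase_time k)"
proof -
  have overlap: "min (max s (phase_time k')) (phase_time (Suc k')) - phase_time k' =
      (if k' < k then phase_dur k' else if k' = k then s - phase_time k else 0)" for k'
  proof -
    have "phase_time (Suc k') \<le> phase_time k" if "k' < k"
      using monoD[OF phase_time_mono] that by simp
    moreover have "phase_time (Suc k) \<le> phase_time k'" if "k < k'"
      using monoD[OF phase_time_mono] that by simp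
    ultimately show ?thesis using s phase_dur_nonneg[of k'] by (auto simp: phase_Suc)
  qed
  have "consumption i j s = (\<Sum>k'<m. (if k' \<in> {..<k} then agent_rate k' i j * phase_dur k' else 0)
      + (if k' = k then agent_rate k i j * (s - phase_time k) else 0))"
    unfolding consumption_def overlap by (intro sum.cong) auto
  also have "\<dots> = (\<Sum>k'\<in>{..<m} \<inter> {..<k}. agent_rate k' i j * phase_dur k')
      + agent_rate k i j * (s - phase_time k)"
    using k by (simp add: sum.distrib sum.inter_restrict)
  also have "{..<m} \<inter> {..<k} = {..<k}" using k by auto
  finally show ?thesis by (simp add: phase_alloc_sum)
qed

lemma consumption_final: "consumption i j 1 = phase_alloc m i j"
proof (cases "m = 0")
  case True thus ?thesis unfolding consumption_def phase_alloc_sum by simp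
next
  case False
  define k where "k = m - 1"
  have k: "k < m" "Suc k = m" using False by (simp_all add: k_def)
  have d: "phase_dur k = 1 - phase_time k" using phase_time_final phase_Suc(1)[of k] k(2) by simp
  have "consumption i j 1 = phase_alloc (Suc k) i j"
    using consumption_in_phase[OF k(1), of 1] phase_time_le_1[of k] by (simp add: phase_Suc d)
  thus ?thesis unfolding k(2) .
qed

lemma remaining_in_phase:
  assumes "k < m" "phase_time k \<le> s" "s \<le> phase_time (Suc k)"
  shows "remaining n q consumption s j = phase_left k j - rate k j * (s - phase_time k)"
  unfolding remaining_def consumption_in_phase[OF assms] phase_left_eq[of k j] rate_eq_sum
  by (simp add: sum.distrib sum_distrib_right)

lemma remaining_pos_in_phase:
  assumes "k < m" "phase_time k \<le> s" "s < phase_time (Suc k)" "j < m"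
  shows "0 < remaining n q consumption s j \<longleftrightarrow> 0 < phase_left k j"
proof (cases "0 < rate k j")
  case True
  have "rate k j * (s - phase_time k) < rate k j * phase_dur k"
    using True assms by (simp add: phase_Suc)
  thus ?thesis using remaining_in_phase[of k s j] assms phase_consumed_le[of j k]
    eat_rate_pos_imp_remaining_pos[OF True] by simp
next
  case False
  hence "rate k j = 0" using rate_nonneg[of k j] by simp
  thus ?thesis using remaining_in_phase[of k s j] assms by simp
qed

lemma consumption_right_linear_in_phase:
  assumes k: "k < m" "phase_time k \<le> t" "t < phase_time (Suc k)"
    and s: "t \<le> s" "s \<le> phase_time (Suc k)" and "i < n"
  shows "consumption i j s =
    consumption i j t + (if eats m b (remaining n q consumption t) i j then r i else 0) * (s - t)"
proof -
  have "eats m b (remaining n q consumption t) i j \<longleftrightarrow> eats m b (phase_left k) i j"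
    by (rule eats_cong) (use remaining_pos_in_phase[OF k] bids[OF \<open>i < n\<close>] bij_betwE in blast)+
  hence "agent_rate k i j = (if eats m b (remaining n q consumption t) i j then r i else 0)"
    using \<open>i < n\<close> by (simp add: agent_rate_def)
  moreover have "consumption i j s - consumption i j t = agent_rate k i j * (s - t)"
  proof -
    have "consumption i j s = phase_alloc k i j + agent_rate k i j * (s - phase_time k)"
      using consumption_in_phase[OF k(1)] k s by simp
    moreover have "consumption i j t = phase_alloc k i j + agent_rate k i j * (t - phase_time k)"
      using consumption_in_phase[OF k(1)] k by simp
    ultimately show ?thesis by (simp add: algebra_simps)
  qed
  ultimately show ?thesis by simp
qed

lemma greedy_run_consumption: "greedy_run n m q r b consumption"
proof
  show "continuous_on {0..1} (consumption i j)" for i j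
    unfolding consumption_def by (intro continuous_intros)
  have "min (max 0 (phase_time k)) (phase_time (Suc k)) = phase_time k" for k
    using phase_time_nonneg[of k] monoD[OF phase_time_mono, of k "Suc k"] by simp
  thus "consumption i j 0 = 0" for i j unfolding consumption_def by simp
  show "0 \<le> remaining n q consumption t j" if t: "0 \<le> t" "t \<le> 1" and "j < m" for t j
  proof -
    have "0 < m" using \<open>j < m\<close> by simp
    obtain k where k: "k < m" "phase_time k \<le> t" "t \<le> phase_time (Suc k)"
      using mono_interval_index_le[OF phase_time_mono, of t m] \<open>0 < m\<close> t phase_0 phase_time_final
      by auto
    have "rate k j * (t - phase_time k) \<le> rate k j * phase_dur k"
      using k rate_nonneg[of k j] by (intro mult_left_mono) (auto simp: phase_Suc)
    thus ?thesis using remaining_in_phase[OF k] phase_consumed_le[OF \<open>j < m\<close>, of k] by simp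
  qed
  show "\<exists>\<epsilon>>0. t + \<epsilon> \<le> 1 \<and> (\<forall>s i j. t \<le> s \<longrightarrow> s \<le> t + \<epsilon> \<longrightarrow> i < n \<longrightarrow> j < m \<longrightarrow>
      consumption i j s = consumption i j t +
        (if eats m b (remaining n q consumption t) i j then r i else 0) * (s - t))"
    if t: "0 \<le> t" "t < 1" for t
  proof -
    obtain k where k: "k < m" "phase_time k \<le> t" "t < phase_time (Suc k)"
      using interval_index[of phase_time t m] t phase_0 phase_time_final by auto
    show ?thesis
    proof (intro exI[of _ "phase_time (Suc k) - t"] conjI allI impI)
      show "0 < phase_time (Suc k) - t" "t + (phase_time (Suc k) - t) \<le> 1"
        using k phase_time_le_1[of "Suc k"] by simp_all
      fix s i j assume "t \<le> s" "s \<le> t + (phase_time (Suc k) - t)" "i < n"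
      thus "consumption i j s = consumption i j t +
          (if eats m b (remaining n q consumption t) i j then r i else 0) * (s - t)"
        by (intro consumption_right_linear_in_phase[OF k]) simp_all
    qed
  qed
qed (rule r_pos)

end

section \<open>Deviations\<close>

text \<open>Under truthful bidding agent i eats from its top k+1 goods whenever one of them is available,
  so its total amount of these goods grows at least as fast as under c', which only eats goods
  available in c.\<close>

lemma lex_consumption_le:
  assumes R: "greedy_run n m q r \<pi> c" and R': "greedy_run n m q r \<sigma> c'"
    and i: "i < n" and bij: "bij_betw (\<pi> i) {..<m} {..<m}" and T: "0 \<le> T" "T \<le> 1"
    and avail: "\<And>t j. 0 \<le> t \<Longrightarrow> t < T \<Longrightarrow> j < m \<Longrightarrow> eats m \<sigma> (remaining n q c' t) i j \<Longrightarrow>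
      0 < remaining n q c t j"
    and k: "k < m" and agree: "\<And>k'. k' < k \<Longrightarrow> c' i (\<pi> i k') T = c i (\<pi> i k') T"
  shows "c' i (\<pi> i k) T \<le> c i (\<pi> i k) T"
proof -
  interpret truthful: greedy_run n m q r \<pi> c by (rule R)
  interpret deviant: greedy_run n m q r \<sigma> c' by (rule R')
  have pim: "\<pi> i k' < m" if "k' \<le> k" for k' using bij k that unfolding bij_betw_def by auto
  have inj: "inj_on (\<pi> i) {..k}"
    using bij k unfolding bij_betw_def by (auto intro: inj_on_subset)
  define h where "h t = (\<Sum>k'\<le>k. c i (\<pi> i k') t) - (\<Sum>k'\<le>k. c' i (\<pi> i k') t)" for t
  have "h 0 \<le> h T"
  proof (rule right_linear_mono[OF T(1)])
    show "continuous_on {0..T} h" unfolding h_def using T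
      by (intro continuous_intros truthful.continuous_on_subinterval deviant.continuous_on_subinterval) auto
    fix t assume t: "0 \<le> t" "t < T"
    hence "t < 1" using T by simp
    define \<rho> where "\<rho> = (if \<exists>k'\<in>{..k}. eats m \<pi> (remaining n q c t) i (\<pi> i k') then r i else 0)"
    define \<rho>' where "\<rho>' = (if \<exists>k'\<in>{..k}. eats m \<sigma> (remaining n q c' t) i (\<pi> i k') then r i else 0)"
    obtain \<epsilon> where "0 < \<epsilon>" and lin: "\<forall>s. t \<le> s \<longrightarrow> s \<le> t + \<epsilon> \<longrightarrow>
        (\<Sum>k'\<le>k. c i (\<pi> i k') s) = (\<Sum>k'\<le>k. c i (\<pi> i k') t) + \<rho> * (s - t)"
      using truthful.prefix_consumption_right_linear[OF t(1) \<open>t < 1\<close> i inj pim] unfolding \<rho>_def by blast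
    obtain \<epsilon>' where "0 < \<epsilon>'" and lin': "\<forall>s. t \<le> s \<longrightarrow> s \<le> t + \<epsilon>' \<longrightarrow>
        (\<Sum>k'\<le>k. c' i (\<pi> i k') s) = (\<Sum>k'\<le>k. c' i (\<pi> i k') t) + \<rho>' * (s - t)"
      using deviant.prefix_consumption_right_linear[OF t(1) \<open>t < 1\<close> i inj pim] unfolding \<rho>'_def by blast
    have "\<exists>k'\<in>{..k}. eats m \<pi> (remaining n q c t) i (\<pi> i k')"
      if k': "k' \<le> k" "eats m \<sigma> (remaining n q c' t) i (\<pi> i k')" for k'
    proof -
      have "0 < remaining n q c t (\<pi> i k')" using avail[OF t pim] k' by blast
      moreover have "k' < m" using k'(1) k by simp
      ultimately obtain k'' where "k'' \<le> k'" "eats m \<pi> (remaining n q c t) i (\<pi> i k'')"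
        using eats_ranked_before[of k' m "remaining n q c t" \<pi> i] by blast
      thus ?thesis using k'(1) by auto
    qed
    hence "\<rho>' \<le> \<rho>" unfolding \<rho>_def \<rho>'_def using truthful.rate_pos[OF i] by auto
    moreover have "h s = h t + (\<rho> - \<rho>') * (s - t)" if s: "t \<le> s" "s \<le> t + min \<epsilon> \<epsilon>'" for s
    proof -
      have "s \<le> t + \<epsilon>" "s \<le> t + \<epsilon>'" using s(2) by simp_all
      hence "(\<Sum>k'\<le>k. c i (\<pi> i k') s) = (\<Sum>k'\<le>k. c i (\<pi> i k') t) + \<rho> * (s - t)"
        "(\<Sum>k'\<le>k. c' i (\<pi> i k') s) = (\<Sum>k'\<le>k. c' i (\<pi> i k') t) + \<rho>' * (s - t)"
        using lin lin' s(1) by blast+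
      thus ?thesis unfolding h_def by (simp add: algebra_simps)
    qed
    ultimately show "\<exists>\<rho>\<ge>0. \<exists>\<epsilon>>0. \<forall>s. t \<le> s \<longrightarrow> s \<le> t + \<epsilon> \<longrightarrow> h s = h t + \<rho> * (s - t)"
      using \<open>0 < \<epsilon>\<close> \<open>0 < \<epsilon>'\<close> by (metis diff_ge_0_iff_ge min_less_iff_conj)
  qed
  moreover have "h 0 = 0" unfolding h_def by (simp add: truthful.start deviant.start)
  moreover have "h T = c i (\<pi> i k) T - c' i (\<pi> i k) T"
    unfolding h_def lessThan_Suc_atMost[symmetric] using agree by simp
  ultimately show ?thesis by simp
qed

lemma first_violation:
  fixes f g :: "real \<Rightarrow> nat \<Rightarrow> real"
  assumes cont: "\<And>j. j < m \<Longrightarrow> continuous_on {0..1} (\<lambda>t. f t j)"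
    and anti: "\<And>x y j. 0 \<le> x \<Longrightarrow> x \<le> y \<Longrightarrow> y \<le> 1 \<Longrightarrow> j < m \<Longrightarrow> g y j \<le> g x j"
    and viol: "0 \<le> t" "t \<le> 1" "j < m" "f t j \<le> 0" "0 < g t j"
  obtains \<tau> k where "0 \<le> \<tau>" "\<tau> \<le> 1" "k < m" "f \<tau> k \<le> 0" "0 < g \<tau> k"
    "\<And>t j. 0 \<le> t \<Longrightarrow> t < \<tau> \<Longrightarrow> j < m \<Longrightarrow> f t j \<le> 0 \<Longrightarrow> g t j \<le> 0"
proof -
  define G where "G = {k. k < m \<and> (\<exists>t. 0 \<le> t \<and> t \<le> 1 \<and> f t k \<le> 0 \<and> 0 < g t k)}"
  define Z where "Z k = {t. 0 \<le> t \<and> t \<le> 1 \<and> f t k \<le> 0}" for k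
  have "j \<in> G" unfolding G_def using viol by auto
  have "finite G" unfolding G_def by (rule finite_subset[of _ "{..<m}"]) auto
  have first: "Inf (Z k) \<in> Z k" "\<And>t. t \<in> Z k \<Longrightarrow> Inf (Z k) \<le> t" "0 < g (Inf (Z k)) k"
    if kG: "k \<in> G" for k
  proof -
    obtain t where t: "0 \<le> t" "t \<le> 1" "f t k \<le> 0" "0 < g t k" and "k < m"
      using kG unfolding G_def by auto
    have "Z k = {0..1} \<inter> (\<lambda>t. f t k) -` {..0}" unfolding Z_def by auto
    hence "closed (Z k)" using continuous_closed_preimage[OF cont[OF \<open>k < m\<close>]] by simp
    moreover have "Z k \<noteq> {}" and bdd: "bdd_below (Z k)" using t unfolding Z_def by (auto intro: bdd_belowI[of _ 0])
    ultimately show inZ: "Inf (Z k) \<in> Z k" by (intro closed_contains_Inf)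
    show "\<And>t. t \<in> Z k \<Longrightarrow> Inf (Z k) \<le> t" using bdd by (simp add: cInf_lower)
    have "Inf (Z k) \<le> t" using bdd t by (intro cInf_lower) (auto simp: Z_def)
    hence "g t k \<le> g (Inf (Z k)) k" using anti inZ t \<open>k < m\<close> unfolding Z_def by auto
    thus "0 < g (Inf (Z k)) k" using t by simp
  qed
  have fin: "finite ((\<lambda>k. Inf (Z k)) ` G)" and ne: "(\<lambda>k. Inf (Z k)) ` G \<noteq> {}"
    using \<open>finite G\<close> \<open>j \<in> G\<close> by auto
  obtain k where "k \<in> G" and k_eq: "Inf (Z k) = Min ((\<lambda>k. Inf (Z k)) ` G)"
    using Min_in[OF fin ne] by auto
  have k_min: "Inf (Z k) \<le> Inf (Z k')" if "k' \<in> G" for k'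
    unfolding k_eq using Min_le[OF fin] that by simp
  show ?thesis
  proof (rule that[of "Inf (Z k)" k])
    show "0 \<le> Inf (Z k)" "Inf (Z k) \<le> 1" "f (Inf (Z k)) k \<le> 0" using first(1)[OF \<open>k \<in> G\<close>] by (auto simp: Z_def)
    show "k < m" using \<open>k \<in> G\<close> by (simp add: G_def)
    show "0 < g (Inf (Z k)) k" using first(3)[OF \<open>k \<in> G\<close>] .
    fix t j' assume t: "0 \<le> t" "t < Inf (Z k)" "j' < m" "f t j' \<le> 0"
    show "g t j' \<le> 0"
    proof (rule ccontr)
      assume "\<not> g t j' \<le> 0"
      hence "j' \<in> G" unfolding G_def using t first(1)[OF \<open>k \<in> G\<close>] by (auto simp: Z_def)
      hence "Inf (Z j') \<le> t" using first(2) t first(1)[OF \<open>k \<in> G\<close>] by (auto simp: Z_def)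
      thus False using k_min[OF \<open>j' \<in> G\<close>] t by simp
    qed
  qed
qed

locale deviation =
  truthful: greedy_run n m q r \<pi> c + deviant: greedy_run n m q r \<sigma> c'
  for n m :: nat and q r :: "nat \<Rightarrow> real" and \<pi> \<sigma> :: "nat \<Rightarrow> nat \<Rightarrow> nat"
    and c c' :: "nat \<Rightarrow> nat \<Rightarrow> real \<Rightarrow> real" +
  fixes S :: "nat set"
  assumes bids: "\<And>i. i < n \<Longrightarrow> bij_betw (\<pi> i) {..<m} {..<m}"
    and coalition: "S \<subseteq> {..<n}" "S \<noteq> {}"
    and capacity: "\<And>j. j < m \<Longrightarrow> (\<Sum>i\<in>S. r i) \<le> q j"
    and outsiders_truthful: "\<And>i k. i < n \<Longrightarrow> i \<notin> S \<Longrightarrow> k < m \<Longrightarrow> \<sigma> i k = \<pi> i k"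
    and members_weakly_better: "\<And>i. i \<in> S \<Longrightarrow> weak_pref m (\<pi> i) (\<lambda>j. c' i j 1) (\<lambda>j. c i j 1)"

text \<open>\<tau> is the first time at which some good g is exhausted in the truthful run but not after the
  deviation. Such a time cannot exist.\<close>

locale first_lag = deviation +
  fixes \<tau> :: real and g :: nat
  assumes tau: "0 \<le> \<tau>" "\<tau> \<le> 1" and good: "g < m"
    and exhausted: "remaining n q c \<tau> g \<le> 0"
    and available: "0 < remaining n q c' \<tau> g"
    and no_earlier_lag:
      "\<And>t j. 0 \<le> t \<Longrightarrow> t < \<tau> \<Longrightarrow> j < m \<Longrightarrow> remaining n q c t j \<le> 0 \<Longrightarrow> remaining n q c' t j \<le> 0"
begin

lemma deviant_eats_available:
  assumes "0 \<le> t" "t < \<tau>" "j < m" "eats m \<sigma> (remaining n q c' t) i j"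
  shows "0 < remaining n q c t j"
  using no_earlier_lag[OF assms(1-3)] eats_remaining_pos[OF assms(4)] by fastforce

lemma consumption_frozen:
  assumes "0 \<le> t0" "t0 < \<tau>" "j < m" "remaining n q c t0 j \<le> 0" "i < n"
  shows "c i j 1 = c i j \<tau>" "c' i j 1 = c' i j \<tau>"
proof -
  have "remaining n q c' t0 j \<le> 0" using no_earlier_lag assms(1-4) by blast
  moreover have "t0 \<le> \<tau>" "t0 \<le> 1" using assms tau by simp_all
  ultimately have "c i j 1 = c i j t0" "c i j \<tau> = c i j t0" "c' i j 1 = c' i j t0" "c' i j \<tau> = c' i j t0"
    using assms tau
    by (auto intro!: truthful.consumption_const_after_exhausted deviant.consumption_const_after_exhausted)
  thus "c i j 1 = c i j \<tau>" "c' i j 1 = c' i j \<tau>" by simp_all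
qed

lemma outsider_keeps_eating:
  assumes i: "i < n" "i \<notin> S" and t: "0 \<le> t0" "t0 < \<tau>" "t0 \<le> t" "t \<le> 1"
    and "eats m \<pi> (remaining n q c t0) i j" "0 < remaining n q c' t j"
  shows "eats m \<sigma> (remaining n q c' t) i j"
proof -
  obtain kj where kj: "kj < m" "j = \<pi> i kj" "\<forall>k<kj. \<not> 0 < remaining n q c t0 (\<pi> i k)"
    using assms(7) unfolding eats_iff by blast
  have "\<not> 0 < remaining n q c' t (\<pi> i k)" if "k < kj" for k
  proof -
    have "\<pi> i k < m" using kj that bids[OF i(1)] bij_betwE by fastforce
    hence "remaining n q c' t0 (\<pi> i k) \<le> 0" using no_earlier_lag[OF t(1,2)] kj that by force
    moreover have "remaining n q c' t (\<pi> i k) \<le> remaining n q c' t0 (\<pi> i k)"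
      using deviant.remaining_antimono[OF t(1,3,4) \<open>\<pi> i k < m\<close>] .
    ultimately show ?thesis by simp
  qed
  hence "eats m \<pi> (remaining n q c' t) i j" unfolding eats_iff using kj assms(8) by blast
  thus ?thesis using eats_cong[of m \<sigma> i \<pi> "remaining n q c' t" "remaining n q c' t" j]
    outsiders_truthful[OF i] by blast
qed

lemma outsider_gets_more:
  assumes i: "i < n" "i \<notin> S"
  shows "c i g \<tau> \<le> c' i g \<tau>"
proof -
  have "(\<lambda>s. c' i g s - c i g s) 0 \<le> (\<lambda>s. c' i g s - c i g s) \<tau>"
  proof (rule right_linear_mono[OF tau(1)])
    show "continuous_on {0..\<tau>} (\<lambda>s. c' i g s - c i g s)"
      using tau by (intro continuous_intros truthful.continuous_on_subinterval deviant.continuous_on_subinterval) auto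
    fix t assume t: "0 \<le> t" "t < \<tau>"
    have "t < 1" using t tau by simp
    define \<rho> where "\<rho> = (if eats m \<pi> (remaining n q c t) i g then r i else 0)"
    define \<rho>' where "\<rho>' = (if eats m \<sigma> (remaining n q c' t) i g then r i else 0)"
    obtain \<epsilon> where "0 < \<epsilon>" and lin: "\<forall>s. t \<le> s \<longrightarrow> s \<le> t + \<epsilon> \<longrightarrow> c i g s = c i g t + \<rho> * (s - t)"
      using truthful.consumption_right_linear[OF t(1) \<open>t < 1\<close> i(1) good] unfolding \<rho>_def by blast
    obtain \<epsilon>' where "0 < \<epsilon>'" and lin': "\<forall>s. t \<le> s \<longrightarrow> s \<le> t + \<epsilon>' \<longrightarrow> c' i g s = c' i g t + \<rho>' * (s - t)"
      using deviant.consumption_right_linear[OF t(1) \<open>t < 1\<close> i(1) good] unfolding \<rho>'_def by blast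
    have "0 < remaining n q c' t g"
      using deviant.remaining_antimono[OF t(1) _ tau(2) good] t available by force
    hence "\<rho> \<le> \<rho>'"
      using outsider_keeps_eating[OF i t order.refl] \<open>t < 1\<close> truthful.rate_pos[OF i(1)]
      unfolding \<rho>_def \<rho>'_def by auto
    moreover have "c' i g s - c i g s = (c' i g t - c i g t) + (\<rho>' - \<rho>) * (s - t)"
      if "t \<le> s" "s \<le> t + min \<epsilon> \<epsilon>'" for s
    proof -
      have "s \<le> t + \<epsilon>" "s \<le> t + \<epsilon>'" using that by simp_all
      hence "c i g s = c i g t + \<rho> * (s - t)" "c' i g s = c' i g t + \<rho>' * (s - t)"
        using lin lin' that(1) by blast+
      thus ?thesis by (simp add: algebra_simps)
    qed
    ultimately show "\<exists>\<rho>\<ge>0. \<exists>\<epsilon>>0. \<forall>s. t \<le> s \<longrightarrow> s \<le> t + \<epsilon> \<longrightarrow>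
        c' i g s - c i g s = (c' i g t - c i g t) + \<rho> * (s - t)"
      using \<open>0 < \<epsilon>\<close> \<open>0 < \<epsilon>'\<close> by (metis diff_ge_0_iff_ge min_less_iff_conj)
  qed
  thus ?thesis by (simp add: truthful.start deviant.start)
qed

lemma member_gets_more:
  assumes iS: "i \<in> S"
  shows "c i g \<tau> \<le> c' i g 1"
proof (cases "c i g \<tau> \<le> c' i g \<tau>")
  case True
  thus ?thesis
    using deviant.consumption_mono[OF tau order.refl _ good, of i] iS coalition(1) by force
next
  case False
  have i: "i < n" using iS coalition(1) by auto
  have "c i g 0 < c i g \<tau>" using False truthful.start deviant.consumption_nonneg[OF tau i good] by simp
  then obtain t0 where t0: "0 \<le> t0" "t0 < \<tau>" "eats m \<pi> (remaining n q c t0) i g"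
    using truthful.eats_before_consumption_increase[OF order.refl tau i good] by blast
  obtain kg where kg: "kg < m" "g = \<pi> i kg" "\<forall>k<kg. \<not> 0 < remaining n q c t0 (\<pi> i k)"
    using t0(3) unfolding eats_iff by blast
  have frozen: "c i (\<pi> i k) 1 = c i (\<pi> i k) \<tau>" "c' i (\<pi> i k) 1 = c' i (\<pi> i k) \<tau>" if "k < kg" for k
  proof -
    have "\<pi> i k < m" using kg(1) that bids[OF i] bij_betwE by fastforce
    moreover have "remaining n q c t0 (\<pi> i k) \<le> 0" using kg(3) that by (simp add: not_less)
    ultimately show "c i (\<pi> i k) 1 = c i (\<pi> i k) \<tau>" "c' i (\<pi> i k) 1 = c' i (\<pi> i k) \<tau>"
      using consumption_frozen[OF t0(1,2) _ _ i] by blast+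
  qed
  have g_final: "c i g 1 = c i g \<tau>"
    by (rule truthful.consumption_const_after_exhausted[OF tau order.refl i good exhausted])
  from members_weakly_better[OF iS] consider (equal) "\<forall>j<m. c' i j 1 = c i j 1"
    | (strict) k0 where "k0 < m" "\<forall>k'<k0. c' i (\<pi> i k') 1 = c i (\<pi> i k') 1"
        "c i (\<pi> i k0) 1 < c' i (\<pi> i k0) 1"
    unfolding weak_pref_def strict_pref_def by blast
  thus ?thesis
  proof cases
    case equal thus ?thesis using g_final good by simp
  next
    case strict
    consider "k0 < kg" | "k0 = kg" | "kg < k0" by linarith
    thus ?thesis
    proof cases
      case 1
      have "c' i (\<pi> i k0) \<tau> \<le> c i (\<pi> i k0) \<tau>"
      proof (rule lex_consumption_le[OF truthful.greedy_run_axioms deviant.greedy_run_axioms i bids[OF i]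
            tau _ strict(1)])
        show "0 < remaining n q c t j"
          if "0 \<le> t" "t < \<tau>" "j < m" "eats m \<sigma> (remaining n q c' t) i j" for t j
          using deviant_eats_available that by blast
        show "c' i (\<pi> i k') \<tau> = c i (\<pi> i k') \<tau>" if "k' < k0" for k'
          using frozen[of k'] strict(2) that 1 by simp
      qed
      thus ?thesis using frozen[OF 1] strict(3) by simp
    next
      case 2 thus ?thesis using strict(3) kg(2) g_final by simp
    next
      case 3 thus ?thesis using strict(2)[rule_format, OF 3] kg(2) g_final by simp
    qed
  qed
qed

lemma all_get_same_g:
  assumes "i < n" shows "c' i g 1 = c i g \<tau>"
proof -
  have nonneg: "0 \<le> c' i g 1 - c i g \<tau>" if "i \<in> {..<n}" for i
  proof (cases "i \<in> S")
    case True thus ?thesis using member_gets_more by simp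
  next
    case False
    thus ?thesis using that outsider_gets_more[of i] deviant.consumption_mono[OF tau order.refl _ good, of i]
      by simp
  qed
  have "(\<Sum>i<n. c i g \<tau>) = q g"
    using exhausted truthful.remaining_nonneg[OF tau good] unfolding remaining_def by simp
  moreover have "(\<Sum>i<n. c' i g 1) \<le> q g"
    using deviant.remaining_nonneg[of 1 g] good unfolding remaining_def by simp
  ultimately have "(\<Sum>i<n. c' i g 1 - c i g \<tau>) \<le> 0" by (simp add: sum_subtractf)
  moreover have "0 \<le> (\<Sum>i<n. c' i g 1 - c i g \<tau>)" by (rule sum_nonneg) (rule nonneg)
  ultimately have "(\<Sum>i<n. c' i g 1 - c i g \<tau>) = 0" by simp
  thus ?thesis using sum_nonneg_eq_0_iff[of "{..<n}" "\<lambda>i. c' i g 1 - c i g \<tau>"] nonneg assms by simp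
qed

lemma tau_lt_1: "\<tau> < 1"
proof (rule ccontr)
  assume "\<not> \<tau> < 1"
  hence "\<tau> = 1" using tau by simp
  hence "remaining n q c' \<tau> g = remaining n q c \<tau> g" unfolding remaining_def using all_get_same_g by simp
  thus False using exhausted available by simp
qed

lemma outsider_got_no_g:
  assumes i: "i < n" "i \<notin> S" shows "c i g \<tau> = 0"
proof -
  have "c i g \<tau> = c i g 0"
  proof (rule truthful.consumption_const_if_not_eating[OF order.refl tau i(1) good])
    fix t0 assume t0: "0 \<le> t0" "t0 < \<tau>"
    show "\<not> eats m \<pi> (remaining n q c t0) i g"
    proof
      assume "eats m \<pi> (remaining n q c t0) i g"
      hence eating: "eats m \<sigma> (remaining n q c' \<tau>) i g"
        using outsider_keeps_eating[OF i t0 _ tau(2) _ available] t0 by simp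
      obtain \<epsilon> where "0 < \<epsilon>" and lin: "\<forall>s. \<tau> \<le> s \<longrightarrow> s \<le> \<tau> + \<epsilon> \<longrightarrow>
          c' i g s = c' i g \<tau> + (if eats m \<sigma> (remaining n q c' \<tau>) i g then r i else 0) * (s - \<tau>)"
        using deviant.consumption_right_linear[OF tau(1) tau_lt_1 i(1) good] by blast
      define s where "s = min (\<tau> + \<epsilon>) 1"
      have s: "\<tau> \<le> s" "s \<le> \<tau> + \<epsilon>" "s \<le> 1" "\<tau> < s"
        using \<open>0 < \<epsilon>\<close> tau_lt_1 by (auto simp: s_def)
      have "c' i g s = c' i g \<tau> + (if eats m \<sigma> (remaining n q c' \<tau>) i g then r i else 0) * (s - \<tau>)"
        using lin s(1,2) by blast
      hence "c' i g s = c' i g \<tau> + r i * (s - \<tau>)" using eating by simp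
      moreover have "c' i g s \<le> c' i g 1" using deviant.consumption_mono[OF _ s(3) order.refl i(1) good] s tau by simp
      moreover have "c' i g 1 \<le> c' i g \<tau>" using all_get_same_g[OF i(1)] outsider_gets_more[OF i] by simp
      moreover have "0 < r i * (s - \<tau>)" using truthful.rate_pos[OF i(1)] s(4) by simp
      ultimately show False by simp
    qed
  qed
  thus ?thesis using truthful.start by simp
qed

lemma impossible: False
proof -
  have "q g = (\<Sum>i<n. c i g \<tau>)"
    using exhausted truthful.remaining_nonneg[OF tau good] unfolding remaining_def by simp
  also have "\<dots> = (\<Sum>i\<in>S. c i g \<tau>)"
    using coalition(1) outsider_got_no_g by (intro sum.mono_neutral_right) auto
  also have "\<dots> \<le> (\<Sum>i\<in>S. r i * \<tau>)"
  proof (rule sum_mono)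
    fix i assume "i \<in> S"
    hence i: "i < n" using coalition(1) by auto
    have "c i g \<tau> - c i g 0 \<le> r i * (\<tau> - 0)"
      using truthful.rate_pos[OF i] by (intro truthful.consumption_increase_le[OF order.refl tau i good]) auto
    thus "c i g \<tau> \<le> r i * \<tau>" using truthful.start by simp
  qed
  also have "\<dots> = \<tau> * (\<Sum>i\<in>S. r i)" by (simp add: sum_distrib_left mult.commute)
  also have "\<dots> < (\<Sum>i\<in>S. r i)"
  proof -
    have "finite S" using coalition(1) finite_subset by blast
    hence "0 < (\<Sum>i\<in>S. r i)" using coalition truthful.rate_pos by (intro sum_pos) auto
    thus ?thesis using tau_lt_1 by simp
  qed
  finally show False using capacity[OF good] by simp
qed

end

context deviation
begin

lemma exhaustion_preserved:
  assumes "0 \<le> t" "t \<le> 1" "j < m" "remaining n q c t j \<le> 0"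
  shows "remaining n q c' t j \<le> 0"
proof (rule ccontr)
  assume "\<not> remaining n q c' t j \<le> 0"
  hence "0 < remaining n q c' t j" by simp
  from first_violation[where f = "remaining n q c" and g = "remaining n q c'",
      OF truthful.remaining_continuous deviant.remaining_antimono assms this]
  obtain \<tau> g where "0 \<le> \<tau>" "\<tau> \<le> 1" "g < m" "remaining n q c \<tau> g \<le> 0" "0 < remaining n q c' \<tau> g"
    "\<And>t j. 0 \<le> t \<Longrightarrow> t < \<tau> \<Longrightarrow> j < m \<Longrightarrow> remaining n q c t j \<le> 0 \<Longrightarrow> remaining n q c' t j \<le> 0"
    by blast
  then interpret first_lag n m q r \<pi> \<sigma> c c' S \<tau> g by unfold_locales
  show False by (rule impossible)
qed

lemma no_strict_improvement:
  assumes "i \<in> S" shows "\<not> strict_pref m (\<pi> i) (\<lambda>j. c' i j 1) (\<lambda>j. c i j 1)"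
proof
  assume "strict_pref m (\<pi> i) (\<lambda>j. c' i j 1) (\<lambda>j. c i j 1)"
  then obtain k where k: "k < m" "\<forall>k'<k. c' i (\<pi> i k') 1 = c i (\<pi> i k') 1"
    "c i (\<pi> i k) 1 < c' i (\<pi> i k) 1"
    unfolding strict_pref_def by blast
  have i: "i < n" using assms coalition(1) by auto
  have "c' i (\<pi> i k) 1 \<le> c i (\<pi> i k) 1"
  proof (rule lex_consumption_le[OF truthful.greedy_run_axioms deviant.greedy_run_axioms i bids[OF i]
        _ order.refl _ k(1)])
    show "0 < remaining n q c t j"
      if "0 \<le> t" "t < 1" "j < m" "eats m \<sigma> (remaining n q c' t) i j" for t j
      using exhaustion_preserved[of t j] eats_remaining_pos[OF that(4)] that by force
    show "c' i (\<pi> i k') 1 = c i (\<pi> i k') 1" if "k' < k" for k' using k(2) that by simp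
  qed simp
  thus False using k(3) by simp
qed

end

theorem corollary1:
  fixes n m l :: nat and q r :: "nat \<Rightarrow> real" and \<pi> :: "nat \<Rightarrow> nat \<Rightarrow> nat"
  assumes "\<forall>j<m. 0 < q j"
    and "\<forall>i<n. 0 < r i"
    and "(\<Sum>j<m. q j) = (\<Sum>i<n. r i)"
    and "\<forall>i<n. bij_betw (\<pi> i) {..<m} {..<m}"
    and "1 \<le> l"
    and "\<forall>S. S \<subseteq> {..<n} \<and> card S = l \<longrightarrow> (\<forall>j<m. (\<Sum>i\<in>S. r i) \<le> q j)"
  shows "\<forall>S. S \<subseteq> {..<n} \<and> card S = l \<longrightarrow>
           \<not> (\<exists>\<sigma>. (\<forall>i<n. bij_betw (\<sigma> i) {..<m} {..<m})
                 \<and> (\<forall>i<n. i \<notin> S \<longrightarrow> (\<forall>k<m. \<sigma> i k = \<pi> i k))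
                 \<and> (\<forall>i\<in>S. weak_pref m (\<pi> i) (SG n m q r \<sigma> i) (SG n m q r \<pi> i))
                 \<and> (\<exists>i\<in>S. strict_pref m (\<pi> i) (SG n m q r \<sigma> i) (SG n m q r \<pi> i)))"
proof (intro allI impI notI)
  fix S assume S: "S \<subseteq> {..<n} \<and> card S = l"
  assume "\<exists>\<sigma>. (\<forall>i<n. bij_betw (\<sigma> i) {..<m} {..<m})
                 \<and> (\<forall>i<n. i \<notin> S \<longrightarrow> (\<forall>k<m. \<sigma> i k = \<pi> i k))
                 \<and> (\<forall>i\<in>S. weak_pref m (\<pi> i) (SG n m q r \<sigma> i) (SG n m q r \<pi> i))
                 \<and> (\<exists>i\<in>S. strict_pref m (\<pi> i) (SG n m q r \<sigma> i) (SG n m q r \<pi> i))"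
  then obtain \<sigma> where bids: "\<forall>i<n. bij_betw (\<sigma> i) {..<m} {..<m}"
    and outsiders: "\<forall>i<n. i \<notin> S \<longrightarrow> (\<forall>k<m. \<sigma> i k = \<pi> i k)"
    and weak: "\<forall>i\<in>S. weak_pref m (\<pi> i) (SG n m q r \<sigma> i) (SG n m q r \<pi> i)"
    and strict: "\<exists>i\<in>S. strict_pref m (\<pi> i) (SG n m q r \<sigma> i) (SG n m q r \<pi> i)" by blast
  have "S \<noteq> {}" using S assms(5) by auto
  then obtain i0 where "i0 \<in> S" by blast
  hence "0 < n" using S by auto
  interpret truthful: sg_setting n m q r \<pi> using assms(1-4) \<open>0 < n\<close> by unfold_locales auto
  interpret deviant: sg_setting n m q r \<sigma> using assms(1-3) bids \<open>0 < n\<close> by unfold_locales auto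
  have SG: "SG n m q r \<pi> i = (\<lambda>j. truthful.consumption i j 1)"
    "SG n m q r \<sigma> i = (\<lambda>j. deviant.consumption i j 1)" for i
    by (simp_all add: truthful.SG_eq_phase_alloc truthful.consumption_final
        deviant.SG_eq_phase_alloc deviant.consumption_final)
  have "deviation n m q r \<pi> \<sigma> truthful.consumption deviant.consumption S"
    using assms(4,6) S \<open>S \<noteq> {}\<close> outsiders weak unfolding SG
    by (intro deviation.intro deviation_axioms.intro truthful.greedy_run_consumption
        deviant.greedy_run_consumption) auto
  thus False using deviation.no_strict_improvement strict unfolding SG by blast
qed

end
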